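(* Let $g$ be a total recursive function such that, writing $\Phi_i(x,y)$ for the $i$-th $\Sigma^0_2$ formula, $\Phi_i(x,y)$ holds iff $W_{g(i,x,y)}$ is finite. Let $F(i,x,y,s)=\max_{y'\leq y}|W_{g(i,x,y'),s}|$ and $A_i=\{x:\forall y\ \lim_{s\to\infty}F(i,x,y,s)<\infty\}$. For every $i$ and $n$, let $B(i,n,y,s)=\min\{F(i,x,y,s):x\in B^n\}$. Then: if $A_i\cap B^n\neq\emptyset$, then for every $y$, $\lim_{s\to\infty}B(i,n,y,s)<\infty$; and if $A_i\cap B^n=\emptyset$, then there exists $y_0$ such that for all $y>y_0$, $\lim_{s\to\infty}B(i,n,y,s)=\infty$.
   Context: $W_e$ denotes the $e$-th recursively enumerable set and $W_{e,s}$ its enumeration up to stage $s$. For $x=\sum_{i=0}^{k}2^{n_i}\in\mathbb{Z}^+$ with $n_0<\cdots<n_k$, set $\mu(x)=n_k$. For each $n$, $B^n=\{x\in\mathbb{Z}^+:\mu(x)=n\}$ (a finite set). *)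

theory Defs
  imports Complex_Main
begin

definition mu :: "nat \<Rightarrow> nat" where
  "mu x = Max {n. bit x n}"

definition Bset :: "nat \<Rightarrow> nat set" where
  "Bset n = {x. 0 < x \<and> mu x = n}"

(* Ws e s plays the role of W_{e,s}; g the index function.
   F(i,x,y,s) = max_{y' <= y} |W_{g(i,x,y'),s}| *)
definition Ffun :: "(nat \<Rightarrow> nat \<Rightarrow> nat set) \<Rightarrow> (nat \<Rightarrow> nat \<Rightarrow> nat \<Rightarrow> nat)
                   \<Rightarrow> nat \<Rightarrow> nat \<Rightarrow> nat \<Rightarrow> nat \<Rightarrow> nat" where
  "Ffun Ws g i x y s = Max ((\<lambda>y'. card (Ws (g i x y') s)) ` {..y})"

definition Aset :: "(nat \<Rightarrow> nat \<Rightarrow> nat set) \<Rightarrow> (nat \<Rightarrow> nat \<Rightarrow> nat \<Rightarrow> nat)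
                   \<Rightarrow> nat \<Rightarrow> nat set" where
  "Aset Ws g i = {x. \<forall>y. \<exists>L::nat. (\<lambda>s. Ffun Ws g i x y s) \<longlonglongrightarrow> L}"

definition Bfun :: "(nat \<Rightarrow> nat \<Rightarrow> nat set) \<Rightarrow> (nat \<Rightarrow> nat \<Rightarrow> nat \<Rightarrow> nat)
                   \<Rightarrow> nat \<Rightarrow> nat \<Rightarrow> nat \<Rightarrow> nat \<Rightarrow> nat" where
  "Bfun Ws g i n y s = Min ((\<lambda>x. Ffun Ws g i x y s) ` Bset n)"

end

theory Submission imports Defs begin

(* Since the stages W_{e,s} grow with s, both F(i,x,y,s) and B(i,n,y,s) are nondecreasing in s,
   so each converges to a natural number iff it is bounded, and otherwise tends to infinity.
   If x lies in A_i and in B^n, then B(i,n,y,.) is bounded by the convergent F(i,x,y,.).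
   If A_i and B^n are disjoint, every x in the finite set B^n has some y_x for which F(i,x,y_x,.)
   diverges; F is also nondecreasing in y, so beyond y0 = max y_x every F(i,x,y,.) with x in B^n
   diverges, and hence so does their minimum over the finite set B^n. *)

lemma bit_nat_imp_less: "bit (x::nat) k \<Longrightarrow> k < x"
proof (rule ccontr)
  assume "bit x k" "\<not> k < x"
  then have "x < 2^k" using less_exp[of k] by linarith
  then show False using \<open>bit x k\<close> by (simp add: bit_iff_odd)
qed

lemma finite_Bset: "finite (Bset n)"
proof (rule finite_subset)
  show "Bset n \<subseteq> {..<2^(n+1)}"
  proof
    fix x assume "x \<in> Bset n"
    then have top_bit: "Max {k. bit x k} = n" by (simp add: Bset_def mu_def)
    have bits_finite: "finite {k. bit x k}"
      by (rule finite_subset[of _ "{..<x}"]) (auto dest: bit_nat_imp_less)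
    have "take_bit (n+1) x = x"
      by (intro bit_eqI)
        (auto simp: bit_take_bit_iff less_Suc_eq_le top_bit[symmetric] intro: Max_ge[OF bits_finite])
    then show "x \<in> {..<2^(n+1)}" using take_bit_nat_less_exp[of "n+1" x] by simp
  qed
qed simp

lemma power_of_two_in_Bset: "(2::nat)^n \<in> Bset n"
proof -
  have "{k. bit ((2::nat)^n) k} = {n}" by (auto simp: bit_exp_iff)
  then show ?thesis by (simp add: Bset_def mu_def)
qed

lemma Bset_not_empty: "Bset n \<noteq> {}"
  using power_of_two_in_Bset by blast

lemma incseq_nat_convergent_iff_bounded:
  fixes f :: "nat \<Rightarrow> nat"
  assumes "incseq f"
  shows "(\<exists>L. f \<longlonglongrightarrow> L) \<longleftrightarrow> (\<exists>B. \<forall>s. f s \<le> B)"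
proof
  assume "\<exists>L. f \<longlonglongrightarrow> L"
  then obtain L where "f \<longlonglongrightarrow> L" by blast
  then have "\<forall>\<^sub>F s in sequentially. f s < Suc L" by (rule order_tendstoD) simp
  then obtain N where N: "\<And>s. s \<ge> N \<Longrightarrow> f s < Suc L" by (auto simp: eventually_sequentially)
  have "f s \<le> L" for s
  proof -
    have "f s \<le> f (max s N)" using assms by (simp add: incseq_def)
    also have "\<dots> < Suc L" using N by simp
    finally show ?thesis by simp
  qed
  then show "\<exists>B. \<forall>s. f s \<le> B" by blast
next
  assume "\<exists>B. \<forall>s. f s \<le> B"
  then have "bdd_above (range f)" by (auto simp: bdd_above_def)
  then show "\<exists>L. f \<longlonglongrightarrow> L" using LIMSEQ_incseq_SUP[OF _ assms] by blast
qed

lemma incseq_nat_not_convergent_imp_at_top: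
  fixes f :: "nat \<Rightarrow> nat"
  assumes inc: "incseq f" and "\<nexists>L. f \<longlonglongrightarrow> L"
  shows "filterlim f at_top sequentially"
  unfolding filterlim_at_top
proof
  fix Z
  obtain N where "Z < f N"
    using assms incseq_nat_convergent_iff_bounded[OF inc] by (meson not_le)
  then have "\<forall>s\<ge>N. Z \<le> f s" using inc by (auto simp: incseq_def intro: order.trans[of _ "f N"])
  then show "\<forall>\<^sub>F s in sequentially. Z \<le> f s" by (auto simp: eventually_sequentially)
qed

lemma incseq_Min_image:
  fixes f :: "'a \<Rightarrow> nat \<Rightarrow> 'b::linorder"
  assumes "finite A" "A \<noteq> {}" "\<And>x. x \<in> A \<Longrightarrow> incseq (f x)"
  shows "incseq (\<lambda>s. Min ((\<lambda>x. f x s) ` A))"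
  using assms by (auto simp: incseq_def Min_le_iff intro: order.trans)

lemma Min_image_at_top:
  fixes f :: "'a \<Rightarrow> 'c \<Rightarrow> 'b::linorder"
  assumes "finite A" "A \<noteq> {}" "\<And>x. x \<in> A \<Longrightarrow> filterlim (f x) at_top F"
  shows "filterlim (\<lambda>s. Min ((\<lambda>x. f x s) ` A)) at_top F"
  unfolding filterlim_at_top
proof
  fix Z
  have "\<forall>\<^sub>F s in F. \<forall>x\<in>A. Z \<le> f x s"
    using assms by (intro eventually_ball_finite) (auto simp: filterlim_at_top)
  then show "\<forall>\<^sub>F s in F. Z \<le> Min ((\<lambda>x. f x s) ` A)"
    by eventually_elim (use assms in auto)
qed

lemma Ffun_mono_bound: "y \<le> y' \<Longrightarrow> Ffun Ws g i x y s \<le> Ffun Ws g i x y' s"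
  unfolding Ffun_def by (intro Max_mono) auto

context
  fixes Ws :: "nat \<Rightarrow> nat \<Rightarrow> nat set"
  assumes Ws_finite: "\<And>e s. finite (Ws e s)"
    and Ws_mono: "\<And>e s. Ws e s \<subseteq> Ws e (Suc s)"
begin

lemma card_Ws_mono: "s \<le> t \<Longrightarrow> card (Ws e s) \<le> card (Ws e t)"
  using lift_Suc_mono_le[of "Ws e", OF Ws_mono] by (intro card_mono Ws_finite)

lemma incseq_Ffun: "incseq (Ffun Ws g i x y)"
proof (rule incseq_SucI)
  fix s
  show "Ffun Ws g i x y s \<le> Ffun Ws g i x y (Suc s)"
    unfolding Ffun_def
  proof (rule Max.boundedI)
    fix a assume "a \<in> (\<lambda>y'. card (Ws (g i x y') s)) ` {..y}"
    then obtain y' where "y' \<le> y" "a = card (Ws (g i x y') s)" by blast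
    then have "a \<le> card (Ws (g i x y') (Suc s))" by (simp add: card_Ws_mono)
    also have "\<dots> \<le> Max ((\<lambda>y'. card (Ws (g i x y') (Suc s))) ` {..y})"
      using \<open>y' \<le> y\<close> by (intro Max_ge) auto
    finally show "a \<le> Max ((\<lambda>y'. card (Ws (g i x y') (Suc s))) ` {..y})" .
  qed auto
qed

lemma incseq_Bfun: "incseq (Bfun Ws g i n y)"
  unfolding Bfun_def
  by (rule incseq_Min_image[OF finite_Bset Bset_not_empty incseq_Ffun])

lemma Bfun_convergent_if_meets_Aset:
  assumes "x \<in> Aset Ws g i \<inter> Bset n"
  shows "\<exists>L. Bfun Ws g i n y \<longlonglongrightarrow> L"
proof -
  obtain C where C: "\<And>s. Ffun Ws g i x y s \<le> C"
    using assms incseq_nat_convergent_iff_bounded[OF incseq_Ffun] unfolding Aset_def by blast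
  have "Bfun Ws g i n y s \<le> C" for s
    unfolding Bfun_def using finite_Bset assms C by (auto intro: order.trans[OF Min_le])
  then show ?thesis using incseq_nat_convergent_iff_bounded[OF incseq_Bfun] by blast
qed

lemma Bfun_at_top_if_disjoint_Aset:
  assumes "Aset Ws g i \<inter> Bset n = {}"
  shows "\<exists>y0. \<forall>y>y0. filterlim (Bfun Ws g i n y) at_top sequentially"
proof -
  have "\<forall>x\<in>Bset n. \<exists>y. \<nexists>L. Ffun Ws g i x y \<longlonglongrightarrow> L"
    using assms unfolding Aset_def by blast
  then obtain y_of where y_of: "\<And>x. x \<in> Bset n \<Longrightarrow> \<nexists>L. Ffun Ws g i x (y_of x) \<longlonglongrightarrow> L"
    by metis
  have "filterlim (Bfun Ws g i n y) at_top sequentially" if "y > Max (y_of ` Bset n)" for y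
    unfolding Bfun_def
  proof (rule Min_image_at_top[OF finite_Bset Bset_not_empty])
    fix x assume x: "x \<in> Bset n"
    have "y_of x \<le> Max (y_of ` Bset n)" using x finite_Bset by simp
    then have "y_of x \<le> y" using that by linarith
    have "filterlim (Ffun Ws g i x (y_of x)) at_top sequentially"
      using incseq_nat_not_convergent_imp_at_top[OF incseq_Ffun y_of[OF x]] .
    then show "filterlim (Ffun Ws g i x y) at_top sequentially"
      by (rule filterlim_at_top_mono) (simp add: Ffun_mono_bound \<open>y_of x \<le> y\<close>)
  qed
  then show ?thesis by blast
qed

end

(* W_union and g_Phi only fix the intended meaning of Ws and g; the claim holds for any
   increasing family of finite stages. *)
theorem lemma3p5:
  fixes W :: "nat \<Rightarrow> nat set"
    and Ws :: "nat \<Rightarrow> nat \<Rightarrow> nat set"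
    and g :: "nat \<Rightarrow> nat \<Rightarrow> nat \<Rightarrow> nat"
    and Phi :: "nat \<Rightarrow> nat \<Rightarrow> nat \<Rightarrow> bool"
    and i n :: nat
  assumes Ws_finite: "\<And>e s. finite (Ws e s)"
    and Ws_mono: "\<And>e s. Ws e s \<subseteq> Ws e (Suc s)"
    and W_union: "\<And>e. W e = (\<Union>s. Ws e s)"
    and g_Phi: "\<And>j x y. Phi j x y \<longleftrightarrow> finite (W (g j x y))"
  shows "(Aset Ws g i \<inter> Bset n \<noteq> {} \<longrightarrow>
            (\<forall>y. \<exists>L::nat. (\<lambda>s. Bfun Ws g i n y s) \<longlonglongrightarrow> L))
       \<and> (Aset Ws g i \<inter> Bset n = {} \<longrightarrow>
            (\<exists>y0. \<forall>y>y0. filterlim (\<lambda>s. Bfun Ws g i n y s) at_top at_top))"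
  using Bfun_convergent_if_meets_Aset[where Ws = Ws, OF Ws_finite Ws_mono]
    Bfun_at_top_if_disjoint_Aset[where Ws = Ws, OF Ws_finite Ws_mono]
  by blast

end
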